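(* Let $N\ge1$, let $\phi:H_0(S_N)\to M_N$ be the quotient morphism sending $\pi_i\mapsto \pi_i$, where $M_N$ is the quotient of $H_0(S_N)$ by the relations $\pi_i\pi_{i+1}\pi_i=\pi_i\pi_{i+1}$ ($1\le i\le N-2$), let $\Psi$ be the automorphism of $H_0(S_N)$ with $\Psi(\pi_i)=\pi_{N-i}$, and define $\omega(x)=(\phi(x),\phi(\Psi(x)))$ for $x\in H_0(S_N)$. Then every nonempty fiber $\{w\in S_N:\ \omega(\pi_w)=c\}$ of $\omega$ contains a unique $[4321]$-avoiding permutation.
   Context: $S_N$ is generated by simple transpositions $s_1,\dots,s_{N-1}$; permutations are in one-line notation and composed as functions. $H_0(S_N)$ is generated by $\pi_1,\dots,\pi_{N-1}$ with relations $\pi_i^2=\pi_i$, $\pi_i\pi_j=\pi_j\pi_i$ for $|i-j|\ge2$, $\pi_i\pi_{i+1}\pi_i=\pi_{i+1}\pi_i\pi_{i+1}$; $\pi_w:=\pi_{i_1}\cdots\pi_{i_k}$ for any reduced word $w=s_{i_1}\cdots s_{i_k}$, a bijection $S_N\to H_0(S_N)$. A permutation avoids $[4321]$ if its one-line notation has no decreasing subsequence of length $4$. ($M_N$ is isomorphic to the monoid $\operatorname{NDPF}_N$ of order-preserving regressive maps of $\{1,\dots,N\}$.) *)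

theory Defs
  imports "HOL-Combinatorics.Permutations" "HOL-Combinatorics.Transposition"
begin

definition simple_transp :: "nat \<Rightarrow> nat \<Rightarrow> nat" where
  "simple_transp i = transpose i (Suc i)"

definition perm_of_word :: "nat list \<Rightarrow> nat \<Rightarrow> nat" where
  "perm_of_word ws = foldr (\<lambda>i f. simple_transp i \<circ> f) ws id"

definition is_word :: "nat \<Rightarrow> nat list \<Rightarrow> bool" where
  "is_word N ws \<longleftrightarrow> set ws \<subseteq> {1..<N}"

definition reduced_word :: "nat \<Rightarrow> (nat \<Rightarrow> nat) \<Rightarrow> nat list \<Rightarrow> bool" where
  "reduced_word N w ws \<longleftrightarrow> is_word N ws \<and> perm_of_word ws = w \<and>
     (\<forall>vs. is_word N vs \<and> perm_of_word vs = w \<longrightarrow> length ws \<le> length vs)"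

text \<open>A chosen reduced word; pi_w = pi_{i_1}...pi_{i_k} for it.\<close>
definition red_word :: "nat \<Rightarrow> (nat \<Rightarrow> nat) \<Rightarrow> nat list" where
  "red_word N w = (SOME ws. reduced_word N w ws)"

inductive M_rel :: "nat \<Rightarrow> nat list \<Rightarrow> nat list \<Rightarrow> bool" for N :: nat where
  idem: "1 \<le> i \<Longrightarrow> i < N \<Longrightarrow> M_rel N [i, i] [i]"
| comm: "1 \<le> i \<Longrightarrow> i < N \<Longrightarrow> 1 \<le> j \<Longrightarrow> j < N \<Longrightarrow> i + 2 \<le> j \<or> j + 2 \<le> i
          \<Longrightarrow> M_rel N [i, j] [j, i]"
| braid: "1 \<le> i \<Longrightarrow> i + 1 < N \<Longrightarrow> M_rel N [i, i + 1, i] [i + 1, i, i + 1]"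
| extra: "1 \<le> i \<Longrightarrow> i + 1 < N \<Longrightarrow> M_rel N [i, i + 1, i] [i, i + 1]"

definition M_step :: "nat \<Rightarrow> nat list \<Rightarrow> nat list \<Rightarrow> bool" where
  "M_step N u v \<longleftrightarrow> (\<exists>a b x y. u = a @ x @ b \<and> v = a @ y @ b \<and> (M_rel N x y \<or> M_rel N y x))"

definition M_cong :: "nat \<Rightarrow> nat list \<Rightarrow> nat list \<Rightarrow> bool" where
  "M_cong N = (M_step N)\<^sup>*\<^sup>*"

text \<open>The element of M_N represented by a word (its congruence class).\<close>
definition M_class :: "nat \<Rightarrow> nat list \<Rightarrow> nat list set" where
  "M_class N ws = {vs. M_cong N ws vs}"

definition Psi_word :: "nat \<Rightarrow> nat list \<Rightarrow> nat list" where
  "Psi_word N ws = map (\<lambda>i. N - i) ws"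

definition omega :: "nat \<Rightarrow> (nat \<Rightarrow> nat) \<Rightarrow> nat list set \<times> nat list set" where
  "omega N w = (M_class N (red_word N w), M_class N (Psi_word N (red_word N w)))"

definition avoids_4321 :: "nat \<Rightarrow> (nat \<Rightarrow> nat) \<Rightarrow> bool" where
  "avoids_4321 N w \<longleftrightarrow> \<not> (\<exists>i j k l. 1 \<le> i \<and> i < j \<and> j < k \<and> k < l \<and> l \<le> N \<and>
       w i > w j \<and> w j > w k \<and> w k > w l)"

end

theory Submission
  imports Defs
begin

text \<open>The monoid \<open>M\<^sub>N\<close> acts faithfully on \<open>{1..N}\<close>, \<open>\<pi>\<^sub>i\<close> sending \<open>i + 1\<close> to \<open>i\<close>; faithfulness
  follows from a normal form for words. For a reduced word of \<open>w\<close> the resulting map is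
  \<open>x \<mapsto> min w{x..N}\<close>, and \<open>\<Psi>\<close> amounts to conjugating \<open>w\<close> by the reversal \<open>x \<mapsto> N + 1 - x\<close>,
  so \<open>\<omega>(\<pi>\<^sub>w)\<close> records exactly the suffix minima and the prefix maxima of \<open>w\<close>.
  Two \<open>4321\<close>-avoiding permutations with the same such records coincide: at the first
  position where they differ, the records produce a \<open>4321\<close> pattern in one of them.
  In every fibre a permutation maximising \<open>\<Sum>x \<cdot> w(x)\<close> avoids \<open>4321\<close>, because swapping
  the two middle entries of a \<open>4321\<close> pattern keeps the records and increases the sum.\<close>

section \<open>The congruence presenting \<open>M\<^sub>N\<close>\<close>

lemma M_cong_refl [simp]: "M_cong N u u"
  by (simp add: M_cong_def)

lemma M_cong_trans [trans]: "M_cong N u v \<Longrightarrow> M_cong N v w \<Longrightarrow> M_cong N u w"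
  unfolding M_cong_def by (rule rtranclp_trans)

lemma M_cong_sym: "M_cong N u v \<Longrightarrow> M_cong N v u"
  unfolding M_cong_def
proof (induction rule: rtranclp_induct)
  case (step v w)
  then have "M_step N w v"
    unfolding M_step_def by blast
  then show ?case
    using step.IH by (rule converse_rtranclp_into_rtranclp)
qed simp

lemma M_rel_imp_M_cong: "M_rel N x y \<Longrightarrow> M_cong N x y"
  unfolding M_cong_def M_step_def
  by (intro r_into_rtranclp) (metis append.left_neutral append.right_neutral)

lemma M_cong_context: "M_cong N u v \<Longrightarrow> M_cong N (a @ u @ b) (a @ v @ b)"
  unfolding M_cong_def
proof (induction rule: rtranclp_induct)
  case (step v w)
  then obtain a' b' x y where "v = a' @ x @ b'" "w = a' @ y @ b'" and rel: "M_rel N x y \<or> M_rel N y x"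
    unfolding M_step_def by blast
  then have "a @ v @ b = (a @ a') @ x @ (b' @ b)" "a @ w @ b = (a @ a') @ y @ (b' @ b)"
    by simp_all
  with rel have "M_step N (a @ v @ b) (a @ w @ b)"
    unfolding M_step_def by blast
  with step.IH show ?case
    by (rule rtranclp.rtrancl_into_rtrancl)
qed simp

lemma M_cong_append_left: "M_cong N u v \<Longrightarrow> M_cong N (a @ u) (a @ v)"
  using M_cong_context[of N u v a "[]"] by simp

lemma M_cong_append_right: "M_cong N u v \<Longrightarrow> M_cong N (u @ b) (v @ b)"
  using M_cong_context[of N u v "[]" b] by simp

lemma M_class_eq_iff: "M_class N u = M_class N v \<longleftrightarrow> M_cong N u v"
proof
  assume "M_class N u = M_class N v"
  then have "v \<in> M_class N u"
    by (simp add: M_class_def)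
  then show "M_cong N u v"
    by (simp add: M_class_def)
next
  assume "M_cong N u v"
  then have "M_cong N u w \<longleftrightarrow> M_cong N v w" for w
    using M_cong_sym M_cong_trans by blast
  then show "M_class N u = M_class N v"
    unfolding M_class_def by blast
qed

definition commuting_letters :: "nat \<Rightarrow> nat \<Rightarrow> nat \<Rightarrow> bool" where
  "commuting_letters N k j \<longleftrightarrow> 1 \<le> k \<and> k < N \<and> 1 \<le> j \<and> j < N \<and> (k + 2 \<le> j \<or> j + 2 \<le> k)"

lemma M_cong_commute_letter:
  "\<forall>k\<in>set xs. commuting_letters N k j \<Longrightarrow> M_cong N (xs @ [j]) (j # xs)"
proof (induction xs)
  case (Cons k xs)
  then have "M_cong N ([k] @ (xs @ [j])) ([k] @ (j # xs))"
    by (intro M_cong_append_left) simp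
  also have "[k] @ (j # xs) = [k, j] @ xs"
    by simp
  also have "M_cong N \<dots> ([j, k] @ xs)"
    using Cons.prems
    by (intro M_cong_append_right M_rel_imp_M_cong M_rel.comm) (auto simp: commuting_letters_def)
  finally show ?case by simp
qed simp

text \<open>The extra relation \<open>\<pi>\<^sub>j\<pi>\<^sub>j\<^sub>+\<^sub>1\<pi>\<^sub>j = \<pi>\<^sub>j\<pi>\<^sub>j\<^sub>+\<^sub>1\<close> of \<open>M\<^sub>N\<close> is used only here, to let an interval
  word \<open>\<pi>\<^sub>c \<cdots> \<pi>\<^sub>i\<close> absorb letters.\<close>

lemma upt_split_at: "c \<le> j \<Longrightarrow> j < n \<Longrightarrow> [c..<n] = [c..<j] @ j # [Suc j..<n]"
  using upt_add_eq_append[of c j "n - j"] by (simp add: upt_conv_Cons)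

lemma M_cong_upt_absorb_right:
  assumes "1 \<le> c" "c \<le> j" "j \<le> i" "i < N"
  shows "M_cong N ([c..<Suc i] @ [j]) [c..<Suc i]"
proof (cases "j = i")
  case True
  have "M_cong N ([c..<i] @ [i, i] @ []) ([c..<i] @ [i] @ [])"
    using assms by (intro M_cong_context M_rel_imp_M_cong M_rel.idem) auto
  then show ?thesis using True assms by simp
next
  case False
  then have split: "[c..<Suc i] = [c..<j] @ [j, Suc j] @ [Suc (Suc j)..<Suc i]"
    using assms upt_split_at[of c j "Suc i"] upt_conv_Cons[of "Suc j" "Suc i"] by simp
  have "[c..<Suc i] @ [j] = ([c..<j] @ [j, Suc j]) @ ([Suc (Suc j)..<Suc i] @ [j])"
    by (simp only: split append_assoc append_Cons append_Nil)
  also have "M_cong N \<dots> (([c..<j] @ [j, Suc j]) @ (j # [Suc (Suc j)..<Suc i]))"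
    using assms by (intro M_cong_append_left M_cong_commute_letter) (auto simp: commuting_letters_def)
  also have "\<dots> = [c..<j] @ [j, Suc j, j] @ [Suc (Suc j)..<Suc i]"
    by simp
  also have "M_cong N \<dots> ([c..<j] @ [j, Suc j] @ [Suc (Suc j)..<Suc i])"
    using assms False by (intro M_cong_context M_rel_imp_M_cong M_rel.extra[simplified]) auto
  also have "\<dots> = [c..<Suc i]"
    by (simp only: split)
  finally show ?thesis .
qed

lemma M_cong_upt_absorb_left:
  assumes "1 \<le> c" "c < k" "k \<le> i" "i < N"
  shows "M_cong N (k # [c..<Suc i]) [c..<Suc i]"
proof -
  define m where "m = k - 1"
  have k: "k = Suc m" and "c \<le> m"
    using assms unfolding m_def by auto
  have split: "[c..<Suc i] = [c..<m] @ [m, Suc m] @ [Suc (Suc m)..<Suc i]"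
    using assms k upt_split_at[of c m "Suc i"] upt_conv_Cons[of "Suc m" "Suc i"] by simp
  have "k # [c..<Suc i] = (Suc m # [c..<m]) @ [m, Suc m] @ [Suc (Suc m)..<Suc i]"
    by (simp only: k split append_assoc append_Cons append_Nil)
  also have "M_cong N \<dots> (([c..<m] @ [Suc m]) @ [m, Suc m] @ [Suc (Suc m)..<Suc i])"
    using assms k
    by (intro M_cong_append_right M_cong_sym[OF M_cong_commute_letter])
       (auto simp: commuting_letters_def)
  also have "\<dots> = [c..<m] @ [Suc m, m, Suc m] @ [Suc (Suc m)..<Suc i]"
    by simp
  also have "M_cong N \<dots> ([c..<m] @ [m, Suc m, m] @ [Suc (Suc m)..<Suc i])"
    using assms k
    by (intro M_cong_context M_cong_sym[OF M_rel_imp_M_cong] M_rel.braid[simplified]) auto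
  also have "\<dots> = ([c..<m] @ [m, Suc m]) @ (m # [Suc (Suc m)..<Suc i])"
    by simp
  also have "M_cong N \<dots> (([c..<m] @ [m, Suc m]) @ ([Suc (Suc m)..<Suc i] @ [m]))"
    using assms k
    by (intro M_cong_append_left M_cong_sym[OF M_cong_commute_letter]) (auto simp: commuting_letters_def)
  also have "\<dots> = [c..<Suc i] @ [m]"
    by (simp only: split append_assoc append_Cons append_Nil)
  also have "M_cong N \<dots> [c..<Suc i]"
    using assms k \<open>c \<le> m\<close> by (intro M_cong_upt_absorb_right) auto
  finally show ?thesis .
qed

lemma M_cong_upt_absorb_right_list:
  assumes "1 \<le> c" "i < N" "\<forall>k\<in>set ys. c \<le> k \<and> k \<le> i"
  shows "M_cong N ([c..<Suc i] @ ys) [c..<Suc i]"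
  using assms(3)
proof (induction ys rule: rev_induct)
  case (snoc k ys)
  then have "M_cong N (([c..<Suc i] @ ys) @ [k]) ([c..<Suc i] @ [k])"
    by (intro M_cong_append_right) simp
  also have "M_cong N \<dots> [c..<Suc i]"
    using assms snoc.prems by (intro M_cong_upt_absorb_right) auto
  finally show ?case by (simp only: append_assoc)
qed simp

lemma M_cong_upt_absorb_left_list:
  assumes "1 \<le> c" "i < N" "\<forall>k\<in>set xs. c < k \<and> k \<le> i"
  shows "M_cong N (xs @ [c..<Suc i]) [c..<Suc i]"
  using assms(3)
proof (induction xs)
  case (Cons k xs)
  then have "M_cong N ([k] @ xs @ [c..<Suc i]) ([k] @ [c..<Suc i])"
    by (intro M_cong_append_left) simp
  also have "M_cong N \<dots> [c..<Suc i]"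
    using assms Cons.prems M_cong_upt_absorb_left[of c k i N] by (simp only: append_Cons append_Nil) auto
  finally show ?case by (simp only: append_Cons append_Nil)
qed simp

lemma M_cong_upt_snoc:
  assumes "1 \<le> a" "a \<le> b" "a \<le> i" "b \<le> Suc i" "i < N"
  shows "M_cong N ([b..<Suc i] @ [a..<i] @ [i]) ([a..<Suc i] @ [a..<i])"
proof -
  have "[b..<Suc i] @ [a..<i] @ [i] = [b..<Suc i] @ [a..<Suc i]"
    using assms by simp
  also have "M_cong N \<dots> [a..<Suc i]"
  proof (cases "a = b")
    case True
    then show ?thesis
      using assms unfolding True by (intro M_cong_upt_absorb_right_list) auto
  next
    case False
    then show ?thesis
      using assms by (intro M_cong_upt_absorb_left_list) auto
  qed
  also have "M_cong N \<dots> ([a..<Suc i] @ [a..<i])"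
    using assms by (intro M_cong_sym[OF M_cong_upt_absorb_right_list]) auto
  finally show ?thesis .
qed

section \<open>The faithful action of \<open>M\<^sub>N\<close> by order-preserving regressive maps\<close>

text \<open>The action of \<open>\<pi>\<^sub>i\<close> on \<open>{1..N}\<close> realising \<open>M\<^sub>N \<cong> NDPF\<^sub>N\<close>.\<close>

definition pi_map :: "nat \<Rightarrow> nat \<Rightarrow> nat" where
  "pi_map i x = (if x = Suc i then i else x)"

definition ndpf_of_word :: "nat list \<Rightarrow> nat \<Rightarrow> nat" where
  "ndpf_of_word ws = foldr (\<lambda>i f. pi_map i \<circ> f) ws id"

lemma ndpf_of_word_Nil [simp]: "ndpf_of_word [] = id"
  by (simp add: ndpf_of_word_def)

lemma ndpf_of_word_Cons [simp]: "ndpf_of_word (i # ws) = pi_map i \<circ> ndpf_of_word ws"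
  by (simp add: ndpf_of_word_def)

lemma ndpf_of_word_append [simp]: "ndpf_of_word (xs @ ys) = ndpf_of_word xs \<circ> ndpf_of_word ys"
  by (induction xs) auto

lemma ndpf_of_word_outside: "is_word N ws \<Longrightarrow> x \<notin> {1..N} \<Longrightarrow> ndpf_of_word ws x = x"
  by (induction ws) (auto simp: is_word_def pi_map_def)

lemma M_cong_imp_ndpf_of_word_eq:
  assumes "M_cong N u v"
  shows "ndpf_of_word u = ndpf_of_word v"
proof -
  have rel: "ndpf_of_word x = ndpf_of_word y" if "M_rel N x y" for x y
    using that by induction (auto simp: pi_map_def fun_eq_iff)
  have "ndpf_of_word u = ndpf_of_word v" if "M_step N u v" for u v
    using that rel unfolding M_step_def by fastforce
  with assms show ?thesis
    unfolding M_cong_def by (induction rule: rtranclp_induct) auto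
qed

definition ndpf :: "(nat \<Rightarrow> nat) \<Rightarrow> bool" where
  "ndpf f \<longleftrightarrow> mono f \<and> (\<forall>x. f x \<le> x) \<and> (\<forall>x\<ge>1. 1 \<le> f x)"

lemma ndpf_comp: "ndpf f \<Longrightarrow> ndpf g \<Longrightarrow> ndpf (f \<circ> g)"
  unfolding ndpf_def mono_def by (auto intro: le_trans)

lemma ndpf_ndpf_of_word: "\<forall>k\<in>set ws. 1 \<le> k \<Longrightarrow> ndpf (ndpf_of_word ws)"
proof (induction ws)
  case Nil
  then show ?case by (simp add: ndpf_def mono_def)
next
  case (Cons i ws)
  then have "ndpf (pi_map i)"
    by (auto simp: ndpf_def pi_map_def mono_def)
  with Cons show ?case
    unfolding ndpf_of_word_Cons by (intro ndpf_comp) auto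
qed

text \<open>The normal form of an order-preserving regressive map \<open>f\<close>: the word
  \<open>[f n..<n] @ \<dots> @ [f 1..<1]\<close>, whose \<open>x\<close>-th block moves \<open>x\<close> down to \<open>f x\<close>.\<close>

fun canonical_word :: "(nat \<Rightarrow> nat) \<Rightarrow> nat \<Rightarrow> nat list" where
  "canonical_word f 0 = []"
| "canonical_word f (Suc x) = [f (Suc x)..<Suc x] @ canonical_word f x"

lemma canonical_word_letters:
  "ndpf f \<Longrightarrow> k \<in> set (canonical_word f n) \<Longrightarrow> 1 \<le> k \<and> k < n"
proof (induction n)
  case (Suc n)
  moreover have "1 \<le> f (Suc n)"
    using Suc.prems(1) by (simp add: ndpf_def)
  ultimately show ?case
    by (auto simp del: upt_Suc)
qed simp

lemma canonical_word_cong: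
  "(\<And>x. 1 \<le> x \<Longrightarrow> x \<le> n \<Longrightarrow> f x = g x) \<Longrightarrow> canonical_word f n = canonical_word g n"
  by (induction n) auto

lemma M_cong_canonical_word_snoc_top:
  assumes f: "ndpf f" and i: "1 \<le> i" "i < N"
  shows "M_cong N (canonical_word f (Suc i) @ [i]) (canonical_word (f \<circ> pi_map i) (Suc i))"
proof -
  obtain i' where i': "i = Suc i'"
    using i by (cases i) auto
  have ab: "1 \<le> f i" "f i \<le> f (Suc i)" "f i \<le> i" "f (Suc i) \<le> Suc i"
    using f i unfolding ndpf_def mono_def by auto
  have "canonical_word f (Suc i) @ [i] = ([f (Suc i)..<Suc i] @ [f i..<i]) @ (canonical_word f i' @ [i])"
    using i' by (simp del: upt_Suc)
  also have "M_cong N \<dots> (([f (Suc i)..<Suc i] @ [f i..<i]) @ (i # canonical_word f i'))"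
    using canonical_word_letters[OF f, of _ i'] i i'
    by (intro M_cong_append_left M_cong_commute_letter) (fastforce simp: commuting_letters_def)
  also have "\<dots> = ([f (Suc i)..<Suc i] @ [f i..<i] @ [i]) @ canonical_word f i'"
    by (simp del: upt_Suc)
  also have "M_cong N \<dots> (([f i..<Suc i] @ [f i..<i]) @ canonical_word f i')"
    using ab i by (intro M_cong_append_right M_cong_upt_snoc) auto
  also have "\<dots> = canonical_word (f \<circ> pi_map i) (Suc i)"
    using i' canonical_word_cong[of i' "f \<circ> pi_map i" f] by (simp add: pi_map_def del: upt_Suc)
  finally show ?thesis .
qed

lemma M_cong_canonical_word_snoc:
  assumes f: "ndpf f" and i: "1 \<le> i" "i < N" and n: "Suc i \<le> n"
  shows "M_cong N (canonical_word f n @ [i]) (canonical_word (f \<circ> pi_map i) n)"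
  using n
proof (induction n)
  case (Suc n)
  show ?case
  proof (cases "n = i")
    case True
    show ?thesis
      unfolding True by (rule M_cong_canonical_word_snoc_top[OF f i])
  next
    case False
    with Suc.prems have "Suc i \<le> n"
      by simp
    then have "M_cong N ([f (Suc n)..<Suc n] @ (canonical_word f n @ [i]))
        ([f (Suc n)..<Suc n] @ canonical_word (f \<circ> pi_map i) n)"
      by (intro M_cong_append_left Suc.IH)
    moreover have "(f \<circ> pi_map i) (Suc n) = f (Suc n)"
      using False by (simp add: pi_map_def)
    ultimately show ?thesis
      by (simp only: canonical_word.simps append_assoc)
  qed
qed simp

lemma M_cong_canonical_word: "is_word N ws \<Longrightarrow> M_cong N ws (canonical_word (ndpf_of_word ws) N)"
proof (induction ws rule: rev_induct)
  case Nil
  have "canonical_word (ndpf_of_word []) N = []"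
    by (induction N) auto
  then show ?case
    by (simp only: M_cong_refl)
next
  case (snoc i ws)
  then have ws: "is_word N ws" and i: "1 \<le> i" "i < N"
    by (auto simp: is_word_def)
  then have "M_cong N (ws @ [i]) (canonical_word (ndpf_of_word ws) N @ [i])"
    using snoc.IH by (intro M_cong_append_right)
  also have "M_cong N \<dots> (canonical_word (ndpf_of_word ws \<circ> pi_map i) N)"
    using ws i by (intro M_cong_canonical_word_snoc ndpf_ndpf_of_word) (auto simp: is_word_def)
  finally show ?case
    by (simp only: ndpf_of_word_append ndpf_of_word_Cons ndpf_of_word_Nil comp_id)
qed

theorem M_cong_iff_ndpf_of_word_eq:
  assumes "is_word N u" "is_word N v"
  shows "M_cong N u v \<longleftrightarrow> ndpf_of_word u = ndpf_of_word v"
  using M_cong_imp_ndpf_of_word_eq M_cong_canonical_word[OF assms(1)] M_cong_canonical_word[OF assms(2)]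
    M_cong_sym M_cong_trans by metis

section \<open>Inversions and reduced words\<close>

definition inversions :: "nat \<Rightarrow> (nat \<Rightarrow> nat) \<Rightarrow> (nat \<times> nat) set" where
  "inversions N w = {(x, y). 1 \<le> x \<and> x < y \<and> y \<le> N \<and> w y < w x}"

definition inversion_number :: "nat \<Rightarrow> (nat \<Rightarrow> nat) \<Rightarrow> nat" where
  "inversion_number N w = card (inversions N w)"

lemma finite_inversions: "finite (inversions N w)"
  by (rule finite_subset[of _ "{1..N} \<times> {1..N}"]) (auto simp: inversions_def)

lemma inversion_number_id [simp]: "inversion_number N id = 0"
proof -
  have "inversions N id = {}"
    by (auto simp: inversions_def)
  then show ?thesis
    by (simp add: inversion_number_def)
qed

lemma is_word_Nil [simp]: "is_word N []"
  by (simp add: is_word_def)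

lemma is_word_Cons [simp]: "is_word N (i # ws) \<longleftrightarrow> 1 \<le> i \<and> i < N \<and> is_word N ws"
  by (auto simp: is_word_def)

lemma perm_of_word_Nil [simp]: "perm_of_word [] = id"
  by (simp add: perm_of_word_def)

lemma perm_of_word_Cons [simp]: "perm_of_word (i # ws) = simple_transp i \<circ> perm_of_word ws"
  by (simp add: perm_of_word_def)

lemma simple_transp_permutes: "1 \<le> i \<Longrightarrow> i < N \<Longrightarrow> simple_transp i permutes {1..N}"
  unfolding simple_transp_def by (rule permutes_swap_id) auto

lemma simple_transp_simple_transp [simp]: "simple_transp i \<circ> (simple_transp i \<circ> w) = w"
  by (simp add: simple_transp_def fun_eq_iff)

lemma perm_of_word_permutes: "is_word N ws \<Longrightarrow> perm_of_word ws permutes {1..N}"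
proof (induction ws)
  case (Cons i ws)
  then show ?case
    unfolding perm_of_word_Cons by (intro permutes_compose[OF _ simple_transp_permutes]) auto
qed simp

lemma transpose_Suc_less_iff:
  "a \<noteq> b \<Longrightarrow> {a, b} \<noteq> {i, Suc i} \<Longrightarrow> transpose i (Suc i) a < transpose i (Suc i) b \<longleftrightarrow> a < b"
  by (auto simp: transpose_def doubleton_eq_iff)

lemma inversions_simple_transp_ascent:
  assumes w: "w permutes {1..N}" and pq: "1 \<le> p" "p < q" "q \<le> N" and wp: "w p = i" "w q = Suc i"
  shows "inversions N (simple_transp i \<circ> w) = insert (p, q) (inversions N w)"
    and "(p, q) \<notin> inversions N w"
proof -
  have inj: "inj w"
    using w by (rule permutes_inj)
  then have pos: "w x = i \<longleftrightarrow> x = p" "w x = Suc i \<longleftrightarrow> x = q" "x \<noteq> y \<Longrightarrow> w x \<noteq> w y" for x y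
    using wp inj_eq[OF inj, of x p] inj_eq[OF inj, of x q] inj_eq[OF inj, of x y] by auto
  show "(p, q) \<notin> inversions N w"
    using wp by (simp add: inversions_def)
  show "inversions N (simple_transp i \<circ> w) = insert (p, q) (inversions N w)"
  proof (intro set_eqI)
    fix z :: "nat \<times> nat"
    obtain x y where z: "z = (x, y)"
      by fastforce
    show "z \<in> inversions N (simple_transp i \<circ> w) \<longleftrightarrow> z \<in> insert (p, q) (inversions N w)"
    proof (cases "(x, y) = (p, q)")
      case True
      then show ?thesis
        using pq wp z by (simp add: inversions_def simple_transp_def)
    next
      case other: False
      show ?thesis
      proof (cases "x < y")
        case True
        then have "w y \<noteq> w x" "{w y, w x} \<noteq> {i, Suc i}"
          using other pq pos by (auto simp: doubleton_eq_iff)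
        then have "transpose i (Suc i) (w y) < transpose i (Suc i) (w x) \<longleftrightarrow> w y < w x"
          by (rule transpose_Suc_less_iff)
        then show ?thesis
          using other z by (auto simp: inversions_def simple_transp_def)
      next
        case False
        then show ?thesis
          using z pq by (auto simp: inversions_def)
      qed
    qed
  qed
qed

lemma inversion_number_simple_transp_ascent:
  assumes "w permutes {1..N}" "1 \<le> p" "p < q" "q \<le> N" "w p = i" "w q = Suc i"
  shows "inversion_number N (simple_transp i \<circ> w) = Suc (inversion_number N w)"
  using inversions_simple_transp_ascent[OF assms] finite_inversions
  by (simp add: inversion_number_def)

lemma inversion_number_simple_transp_descent:
  assumes w: "w permutes {1..N}" and i: "1 \<le> i" "i < N"
    and "1 \<le> q" "q < p" "p \<le> N" "w p = i" "w q = Suc i"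
  shows "inversion_number N w = Suc (inversion_number N (simple_transp i \<circ> w))"
proof -
  have "simple_transp i \<circ> w permutes {1..N}"
    using w simple_transp_permutes[OF i] by (rule permutes_compose)
  moreover have "(simple_transp i \<circ> w) q = i" "(simple_transp i \<circ> w) p = Suc i"
    using assms by (simp_all add: simple_transp_def)
  ultimately show ?thesis
    using inversion_number_simple_transp_ascent[of "simple_transp i \<circ> w" N q p i] assms by simp
qed

lemma positions_of_adjacent_values:
  assumes w: "w permutes {1..N}" and i: "1 \<le> i" "i < N"
  shows "inv w i \<in> {1..N}" "inv w (Suc i) \<in> {1..N}" "w (inv w i) = i" "w (inv w (Suc i)) = Suc i"
    and "inv w i \<noteq> inv w (Suc i)"
proof -
  show "inv w i \<in> {1..N}" "inv w (Suc i) \<in> {1..N}"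
    using permutes_in_image[OF permutes_inv[OF w]] i by auto
  show "w (inv w i) = i" "w (inv w (Suc i)) = Suc i"
    using permutes_inverses[OF w] by auto
  then show "inv w i \<noteq> inv w (Suc i)"
    by (metis n_not_Suc_n)
qed

lemma inversion_number_simple_transp_le:
  assumes w: "w permutes {1..N}" and i: "1 \<le> i" "i < N"
  shows "inversion_number N (simple_transp i \<circ> w) \<le> Suc (inversion_number N w)"
  using positions_of_adjacent_values[OF w i]
    inversion_number_simple_transp_ascent[OF w, of "inv w i" "inv w (Suc i)" i]
    inversion_number_simple_transp_descent[OF w i, of "inv w (Suc i)" "inv w i"]
  by (cases "inv w i < inv w (Suc i)") auto

lemma inversion_number_le_length: "is_word N ws \<Longrightarrow> inversion_number N (perm_of_word ws) \<le> length ws"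
proof (induction ws)
  case (Cons i ws)
  then have "inversion_number N (perm_of_word (i # ws)) \<le> Suc (inversion_number N (perm_of_word ws))"
    unfolding perm_of_word_Cons by (intro inversion_number_simple_transp_le perm_of_word_permutes) auto
  moreover have "inversion_number N (perm_of_word ws) \<le> length ws"
    using Cons by simp
  ultimately show ?case
    unfolding length_Cons by linarith
qed simp

lemma permutes_without_descent_eq_id:
  assumes w: "w permutes {1..N}" and asc: "\<And>i. 1 \<le> i \<Longrightarrow> i < N \<Longrightarrow> inv w i < inv w (Suc i)"
  shows "w = id"
proof -
  have g: "inv w permutes {1..N}"
    using w by (rule permutes_inv)
  have mono: "inv w x + k \<le> inv w (x + k)" if "1 \<le> x" "x + k \<le> N" for x k
    using that
  proof (induction k)
    case (Suc k)
    then show ?case using asc[of "x + k"] by simp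
  qed simp
  have "inv w x = x" if x: "x \<in> {1..N}" for x
  proof -
    have "inv w N \<le> N" "1 \<le> inv w 1"
      using permutes_in_image[OF g, of N] permutes_in_image[OF g, of 1] x by auto
    then show ?thesis
      using mono[of x "N - x"] mono[of 1 "x - 1"] x by auto
  qed
  then have "inv w = id"
    using permutes_not_in[OF g] by (auto simp: fun_eq_iff)
  then show ?thesis
    using permutes_inv_inv[OF w] by simp
qed

lemma exists_word_of_inversion_number:
  assumes "w permutes {1..N}"
  shows "\<exists>ws. is_word N ws \<and> perm_of_word ws = w \<and> length ws = inversion_number N w"
  using assms
proof (induction "inversion_number N w" arbitrary: w rule: less_induct)
  case less
  note w = less.prems
  show ?case
  proof (cases "\<exists>i. 1 \<le> i \<and> i < N \<and> inv w (Suc i) < inv w i")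
    case True
    then obtain i where i: "1 \<le> i" "i < N" and desc: "inv w (Suc i) < inv w i"
      by blast
    note pos = positions_of_adjacent_values[OF w i]
    have len: "inversion_number N w = Suc (inversion_number N (simple_transp i \<circ> w))"
      using inversion_number_simple_transp_descent[OF w i _ desc] pos by simp
    then have "inversion_number N (simple_transp i \<circ> w) < inversion_number N w"
      by simp
    moreover have "simple_transp i \<circ> w permutes {1..N}"
      using w simple_transp_permutes[OF i] by (rule permutes_compose)
    ultimately obtain ws where "is_word N ws" "perm_of_word ws = simple_transp i \<circ> w"
        "length ws = inversion_number N (simple_transp i \<circ> w)"
      using less.hyps by blast
    with i len show ?thesis
      by (intro exI[of _ "i # ws"]) simp
  next
    case False
    then have "w = id"
      using positions_of_adjacent_values[OF w]
      by (intro permutes_without_descent_eq_id[OF w]) (meson linorder_neqE_nat)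
    then show ?thesis
      by (intro exI[of _ "[]"]) simp
  qed
qed

lemma reduced_word_iff_length:
  "reduced_word N w ws \<longleftrightarrow> is_word N ws \<and> perm_of_word ws = w \<and> length ws = inversion_number N w"
proof
  assume red: "reduced_word N w ws"
  then have ws: "is_word N ws" "perm_of_word ws = w"
    by (simp_all add: reduced_word_def)
  then obtain vs where "is_word N vs" "perm_of_word vs = w" "length vs = inversion_number N w"
    using exists_word_of_inversion_number perm_of_word_permutes by blast
  with red ws show "is_word N ws \<and> perm_of_word ws = w \<and> length ws = inversion_number N w"
    using inversion_number_le_length[of N ws] unfolding reduced_word_def by force
next
  assume "is_word N ws \<and> perm_of_word ws = w \<and> length ws = inversion_number N w"
  then show "reduced_word N w ws"
    using inversion_number_le_length unfolding reduced_word_def by metis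
qed

lemma reduced_word_red_word: "w permutes {1..N} \<Longrightarrow> reduced_word N w (red_word N w)"
  unfolding red_word_def
  by (rule someI_ex) (use exists_word_of_inversion_number reduced_word_iff_length in blast)

section \<open>Reduced words act by suffix minima\<close>

lemma Min_transpose_Suc_image:
  assumes "finite S" "S \<noteq> {}" and closed: "i \<in> S \<Longrightarrow> Suc i \<in> S"
  shows "Min (transpose i (Suc i) ` S) = pi_map i (Min S)"
proof -
  have m: "Min S \<in> S" "\<And>y. y \<in> S \<Longrightarrow> Min S \<le> y"
    using assms by auto
  show ?thesis
  proof (rule Min_eqI)
    show "finite (transpose i (Suc i) ` S)"
      using assms by simp
    show "pi_map i (Min S) \<in> transpose i (Suc i) ` S"
      using m closed by (cases "Min S = i") (force simp: pi_map_def intro: rev_image_eqI)+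
    fix y
    assume "y \<in> transpose i (Suc i) ` S"
    then obtain z where "z \<in> S" "y = transpose i (Suc i) z"
      by blast
    then show "pi_map i (Min S) \<le> y"
      using m(2)[of z] m(1) by (auto simp: pi_map_def transpose_def)
  qed
qed

lemma reduced_word_Cons:
  assumes red: "reduced_word N w (i # ws)"
  shows "reduced_word N (perm_of_word ws) ws"
    and "inv (perm_of_word ws) i < inv (perm_of_word ws) (Suc i)"
proof -
  define v where "v = perm_of_word ws"
  have ws: "is_word N ws" and i: "1 \<le> i" "i < N" and w: "w = simple_transp i \<circ> v"
    and len: "Suc (length ws) = inversion_number N w"
    using red by (auto simp: reduced_word_iff_length v_def)
  have v: "v permutes {1..N}"
    unfolding v_def using ws by (rule perm_of_word_permutes)
  have le: "inversion_number N v \<le> length ws"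
    unfolding v_def using ws by (rule inversion_number_le_length)
  note pos = positions_of_adjacent_values[OF v i]
  show asc: "inv v i < inv v (Suc i)"
  proof (rule ccontr)
    assume "\<not> inv v i < inv v (Suc i)"
    then have "inv v (Suc i) < inv v i"
      using pos(5) by simp
    then have "inversion_number N v = Suc (inversion_number N w)"
      using inversion_number_simple_transp_descent[OF v i] pos w by simp
    with le len show False
      by simp
  qed
  have "inversion_number N w = Suc (inversion_number N v)"
    using inversion_number_simple_transp_ascent[OF v _ asc] pos w by simp
  with ws len show "reduced_word N (perm_of_word ws) ws"
    by (simp add: reduced_word_iff_length v_def)
qed

text \<open>Since \<open>i # ws\<close> is reduced, the value \<open>i\<close> stands left of the value \<open>i + 1\<close> in
  \<open>perm_of_word ws\<close>, so every suffix containing \<open>i\<close> also contains \<open>i + 1\<close>; on such sets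
  swapping \<open>i\<close> and \<open>i + 1\<close> changes the minimum exactly as \<open>\<pi>\<^sub>i\<close> does.\<close>

lemma ndpf_of_reduced_word:
  assumes "reduced_word N w ws" "x \<in> {1..N}"
  shows "ndpf_of_word ws x = Min (w ` {x..N})"
  using assms
proof (induction ws arbitrary: w)
  case Nil
  then have "w = id"
    by (simp add: reduced_word_def)
  moreover have "Min {x..N} = x"
    using Nil.prems(2) by (intro Min_eqI) auto
  ultimately show ?case
    by simp
next
  case (Cons i ws)
  define v where "v = perm_of_word ws"
  note red = reduced_word_Cons[OF Cons.prems(1), folded v_def]
  have w: "w = simple_transp i \<circ> v" and ws: "is_word N ws" and i: "1 \<le> i" "i < N"
    using Cons.prems(1) by (auto simp: reduced_word_iff_length v_def)
  have v: "v permutes {1..N}"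
    unfolding v_def using ws by (rule perm_of_word_permutes)
  note pos = positions_of_adjacent_values[OF v i]
  have closed: "Suc i \<in> v ` {x..N}" if "i \<in> v ` {x..N}"
  proof -
    from that obtain y where "y \<in> {x..N}" "v y = i"
      by blast
    moreover have "inv v i = y"
      using \<open>v y = i\<close> permutes_inverses(2)[OF v] by metis
    ultimately have "inv v (Suc i) \<in> {x..N}"
      using red(2) pos(2) by auto
    then show ?thesis
      using pos(4) by (metis image_eqI)
  qed
  have "ndpf_of_word (i # ws) x = pi_map i (Min (v ` {x..N}))"
    using Cons.IH[OF red(1)] Cons.prems(2) by (simp add: v_def)
  also have "\<dots> = Min (transpose i (Suc i) ` v ` {x..N})"
    using Cons.prems(2) closed by (intro Min_transpose_Suc_image[symmetric]) auto
  also have "\<dots> = Min (w ` {x..N})"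
    by (simp add: w simple_transp_def image_comp)
  finally show ?case .
qed

section \<open>The automorphism \<open>\<Psi>\<close> as conjugation by the reversal\<close>

definition reversal :: "nat \<Rightarrow> nat \<Rightarrow> nat" where
  "reversal N x = (if x \<in> {1..N} then Suc N - x else x)"

lemma reversal_reversal [simp]: "reversal N (reversal N x) = x"
  unfolding reversal_def by auto

lemma reversal_permutes: "reversal N permutes {1..N}"
  unfolding permutes_def
  by (metis reversal_def reversal_reversal)

lemma conj_reversal_permutes: "w permutes {1..N} \<Longrightarrow> reversal N \<circ> w \<circ> reversal N permutes {1..N}"
  by (intro permutes_compose reversal_permutes)

lemma simple_transp_conj_reversal:
  "1 \<le> i \<Longrightarrow> i < N \<Longrightarrow> simple_transp (N - i) = reversal N \<circ> simple_transp i \<circ> reversal N"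
  unfolding simple_transp_def fun_eq_iff reversal_def transpose_def by auto

lemma length_Psi_word [simp]: "length (Psi_word N ws) = length ws"
  by (simp add: Psi_word_def)

lemma is_word_Psi_word: "is_word N ws \<Longrightarrow> is_word N (Psi_word N ws)"
  by (induction ws) (auto simp: Psi_word_def)

lemma perm_of_word_Psi_word:
  "is_word N ws \<Longrightarrow> perm_of_word (Psi_word N ws) = reversal N \<circ> perm_of_word ws \<circ> reversal N"
proof (induction ws)
  case (Cons i ws)
  then show ?case
    using simple_transp_conj_reversal[of i N] by (simp add: Psi_word_def fun_eq_iff)
qed (simp add: Psi_word_def fun_eq_iff)

lemma inversion_number_conj_reversal_le:
  assumes "w permutes {1..N}"
  shows "inversion_number N (reversal N \<circ> w \<circ> reversal N) \<le> inversion_number N w"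
proof -
  obtain ws where "is_word N ws" "perm_of_word ws = w" "length ws = inversion_number N w"
    using exists_word_of_inversion_number[OF assms] by blast
  then show ?thesis
    using inversion_number_le_length[OF is_word_Psi_word] perm_of_word_Psi_word
    by (metis length_Psi_word)
qed

lemma inversion_number_conj_reversal:
  assumes "w permutes {1..N}"
  shows "inversion_number N (reversal N \<circ> w \<circ> reversal N) = inversion_number N w"
proof -
  have "reversal N \<circ> (reversal N \<circ> w \<circ> reversal N) \<circ> reversal N = w"
    by (simp add: fun_eq_iff)
  then show ?thesis
    using inversion_number_conj_reversal_le[OF assms]
      inversion_number_conj_reversal_le[OF conj_reversal_permutes[OF assms]]
    by simp
qed

lemma reduced_word_Psi_word:
  assumes "reduced_word N w ws"
  shows "reduced_word N (reversal N \<circ> w \<circ> reversal N) (Psi_word N ws)"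
proof -
  have ws: "is_word N ws" "perm_of_word ws = w" "length ws = inversion_number N w"
    using assms by (simp_all add: reduced_word_iff_length)
  then have "w permutes {1..N}"
    using perm_of_word_permutes by blast
  with ws show ?thesis
    by (simp add: reduced_word_iff_length is_word_Psi_word perm_of_word_Psi_word
        inversion_number_conj_reversal)
qed

lemma antimono_Min_commute:
  assumes "antimono f" "finite A" "A \<noteq> {}"
  shows "f (Max A) = Min (f ` A)"
proof (rule Min_eqI[symmetric])
  show "finite (f ` A)" "f (Max A) \<in> f ` A"
    using assms by simp_all
  fix x
  assume "x \<in> f ` A"
  then obtain y where "y \<in> A" "x = f y"
    by blast
  with assms show "f (Max A) \<le> x"
    by (simp add: antimonoD)
qed

lemma reversal_image_atLeastAtMost: "x \<in> {1..N} \<Longrightarrow> reversal N ` {x..N} = {1..Suc N - x}"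
proof (intro equalityI subsetI)
  fix y
  assume "y \<in> {1..Suc N - x}" "x \<in> {1..N}"
  then have "Suc N - y \<in> {x..N}" "y = reversal N (Suc N - y)"
    by (auto simp: reversal_def)
  then show "y \<in> reversal N ` {x..N}"
    by (rule rev_image_eqI)
qed (auto simp: reversal_def)

lemma Min_conj_reversal_image:
  assumes w: "w permutes {1..N}" and x: "x \<in> {1..N}"
  shows "Min ((reversal N \<circ> w \<circ> reversal N) ` {x..N}) = Suc N - Max (w ` {1..Suc N - x})"
proof -
  have "w ` {1..Suc N - x} \<subseteq> w ` {1..N}"
    using x by (intro image_mono) auto
  then have "w ` {1..Suc N - x} \<subseteq> {1..N}"
    using permutes_image[OF w] by simp
  then have rev: "reversal N ` w ` {1..Suc N - x} = (\<lambda>v. Suc N - v) ` w ` {1..Suc N - x}"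
    by (intro image_cong) (auto simp: reversal_def)
  have "(reversal N \<circ> w \<circ> reversal N) ` {x..N} = reversal N ` w ` reversal N ` {x..N}"
    by (simp only: image_comp comp_assoc)
  also have "\<dots> = (\<lambda>v. Suc N - v) ` w ` {1..Suc N - x}"
    by (simp only: reversal_image_atLeastAtMost[OF x] rev)
  finally have "(reversal N \<circ> w \<circ> reversal N) ` {x..N} = (\<lambda>v. Suc N - v) ` w ` {1..Suc N - x}" .
  moreover have "antimono (\<lambda>v::nat. Suc N - v)"
    by (simp add: antimono_def diff_le_mono2)
  then have "Suc N - Max (w ` {1..Suc N - x}) = Min ((\<lambda>v. Suc N - v) ` w ` {1..Suc N - x})"
    using x by (intro antimono_Min_commute) auto
  ultimately show ?thesis
    by simp
qed

section \<open>The fibres of \<open>\<omega>\<close>\<close>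

definition same_records :: "nat \<Rightarrow> (nat \<Rightarrow> nat) \<Rightarrow> (nat \<Rightarrow> nat) \<Rightarrow> bool" where
  "same_records N v w \<longleftrightarrow>
     (\<forall>x\<in>{1..N}. Min (v ` {x..N}) = Min (w ` {x..N}) \<and> Max (v ` {1..x}) = Max (w ` {1..x}))"

lemma M_class_reduced_word_eq_iff:
  assumes "reduced_word N v us" "reduced_word N w ws"
  shows "M_class N us = M_class N ws \<longleftrightarrow> (\<forall>x\<in>{1..N}. Min (v ` {x..N}) = Min (w ` {x..N}))"
proof -
  have words: "is_word N us" "is_word N ws"
    using assms by (simp_all add: reduced_word_def)
  have "M_class N us = M_class N ws \<longleftrightarrow> ndpf_of_word us = ndpf_of_word ws"
    by (simp add: M_class_eq_iff M_cong_iff_ndpf_of_word_eq[OF words])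
  also have "\<dots> \<longleftrightarrow> (\<forall>x\<in>{1..N}. ndpf_of_word us x = ndpf_of_word ws x)"
    using ndpf_of_word_outside[OF words(1)] ndpf_of_word_outside[OF words(2)] by (metis fun_eq_iff)
  also have "\<dots> \<longleftrightarrow> (\<forall>x\<in>{1..N}. Min (v ` {x..N}) = Min (w ` {x..N}))"
    using ndpf_of_reduced_word[OF assms(1)] ndpf_of_reduced_word[OF assms(2)] by simp
  finally show ?thesis .
qed

lemma Max_image_permutes_le:
  fixes w :: "nat \<Rightarrow> nat"
  assumes "w permutes {1..N}" "x \<in> {1..N}"
  shows "Max (w ` {1..x}) \<le> N"
proof -
  have "w y \<in> {1..N}" if "y \<in> {1..x}" for y
    using that assms(2) permutes_in_image[OF assms(1)] by auto
  with assms(2) show ?thesis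
    by auto
qed

lemma ball_atLeastAtMost_reflect: "(\<forall>x\<in>{1..N}. P x) \<longleftrightarrow> (\<forall>x\<in>{1..N::nat}. P (Suc N - x))"
proof -
  have reflect: "Suc N - x \<in> {1..N} \<and> Suc N - (Suc N - x) = x" if "x \<in> {1..N}" for x
    using that by auto
  show ?thesis
  proof
    assume "\<forall>x\<in>{1..N}. P x"
    then show "\<forall>x\<in>{1..N}. P (Suc N - x)"
      using reflect by blast
  next
    assume "\<forall>x\<in>{1..N}. P (Suc N - x)"
    then show "\<forall>x\<in>{1..N}. P x"
      using reflect by metis
  qed
qed

lemma suffix_Min_conj_reversal_eq_iff:
  assumes v: "v permutes {1..N}" and w: "w permutes {1..N}"
  shows "(\<forall>x\<in>{1..N}. Min ((reversal N \<circ> v \<circ> reversal N) ` {x..N}) = Min ((reversal N \<circ> w \<circ> reversal N) ` {x..N}))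
    \<longleftrightarrow> (\<forall>x\<in>{1..N}. Max (v ` {1..x}) = Max (w ` {1..x}))"
    (is "(\<forall>x\<in>{1..N}. ?P x) \<longleftrightarrow> _")
proof -
  have "?P (Suc N - x) \<longleftrightarrow> Max (v ` {1..x}) = Max (w ` {1..x})" if x: "x \<in> {1..N}" for x
  proof -
    have "Suc N - x \<in> {1..N}" "Suc N - (Suc N - x) = x"
      using x by auto
    then have "?P (Suc N - x) \<longleftrightarrow> Suc N - Max (v ` {1..x}) = Suc N - Max (w ` {1..x})"
      using Min_conj_reversal_image[OF v] Min_conj_reversal_image[OF w] by simp
    also have "\<dots> \<longleftrightarrow> Max (v ` {1..x}) = Max (w ` {1..x})"
      using Max_image_permutes_le[OF v x] Max_image_permutes_le[OF w x] x
      by (metis diff_diff_cancel le_SucI)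
    finally show ?thesis .
  qed
  then show ?thesis
    by (subst ball_atLeastAtMost_reflect) blast
qed

theorem omega_eq_iff_same_records:
  assumes v: "v permutes {1..N}" and w: "w permutes {1..N}"
  shows "omega N v = omega N w \<longleftrightarrow> same_records N v w"
proof -
  note red = reduced_word_red_word[OF v] reduced_word_red_word[OF w]
  have "M_class N (Psi_word N (red_word N v)) = M_class N (Psi_word N (red_word N w))
    \<longleftrightarrow> (\<forall>x\<in>{1..N}. Max (v ` {1..x}) = Max (w ` {1..x}))"
    using M_class_reduced_word_eq_iff[OF reduced_word_Psi_word[OF red(1)] reduced_word_Psi_word[OF red(2)]]
      suffix_Min_conj_reversal_eq_iff[OF v w] by simp
  then show ?thesis
    using M_class_reduced_word_eq_iff[OF red] unfolding omega_def same_records_def by auto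
qed

lemma same_records_sym: "same_records N v w \<Longrightarrow> same_records N w v"
  by (simp add: same_records_def)

lemma same_records_trans: "same_records N u v \<Longrightarrow> same_records N v w \<Longrightarrow> same_records N u w"
  by (simp add: same_records_def)

text \<open>At the first position \<open>x\<close> where two permutations with the same records differ, the
  smaller of the two values occurs later in the other permutation, preceded by a larger
  prefix maximum and followed by a smaller suffix minimum: a \<open>4321\<close> pattern.\<close>

lemma same_records_first_difference_not_avoids_4321:
  assumes v: "v permutes {1..N}" and w: "w permutes {1..N}" and rec: "same_records N v w"
    and x: "x \<in> {1..N}" and lt: "v x < w x" and before: "\<forall>y\<in>{1..N}. y < x \<longrightarrow> v y = w y"
  shows "\<not> avoids_4321 N w"
proof -
  have inj_v: "inj v" and inj_w: "inj w"
    using v w by (auto intro: permutes_inj)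
  define y where "y = inv w (v x)"
  have y: "y \<in> {1..N}" "w y = v x"
    using permutes_in_image[OF permutes_inv[OF w]] permutes_in_image[OF v] x
      permutes_inverses[OF w] unfolding y_def by auto
  have "x < y"
  proof (rule ccontr)
    assume "\<not> x < y"
    moreover have "y \<noteq> x"
      using y(2) lt by auto
    ultimately show False
      using before y inj_eq[OF inj_v, of y x] by auto
  qed
  obtain a where a: "1 \<le> a" "a < x" "w x < w a"
  proof -
    obtain z where z: "z \<in> {1..x}" "v z = Max (w ` {1..x})"
      using rec x Max_in[of "v ` {1..x}"] unfolding same_records_def by fastforce
    have wx_le: "w x \<le> Max (w ` {1..x})"
      using x by (intro Max_ge) auto
    then have "z \<noteq> x"
      using z(2) lt by auto
    then have "w z = Max (w ` {1..x})" "w z \<noteq> w x"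
      using before z x inj_eq[OF inj_w, of z x] by auto
    with wx_le have "w x < w z"
      by (metis le_neq_trans)
    with z \<open>z \<noteq> x\<close> show ?thesis
      by (intro that[of z]) auto
  qed
  obtain b where b: "y < b" "b \<le> N" "w b < w y"
  proof -
    have "Min (v ` {y..N}) \<in> v ` {y..N}"
      using y by (intro Min_in) auto
    then obtain z' where z': "z' \<in> {y..N}" "v z' = Min (v ` {y..N})"
      by (metis imageE)
    then have min_ne: "Min (w ` {y..N}) \<noteq> w y"
      using rec y \<open>x < y\<close> inj_eq[OF inj_v, of z' x] unfolding same_records_def by auto
    have "Min (w ` {y..N}) \<in> w ` {y..N}"
      using y by (intro Min_in) auto
    then obtain z where z: "z \<in> {y..N}" "w z = Min (w ` {y..N})"
      by (metis imageE)
    have "w z \<le> w y"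
      unfolding z(2) using y(1) by (intro Min_le) auto
    with min_ne z(2) have "w z < w y"
      by simp
    with z show ?thesis
      by (intro that[of z]) (auto simp: order.order_iff_strict)
  qed
  have "w a > w x" "w x > w y" "w y > w b"
    using a lt y b by auto
  then show ?thesis
    using a \<open>x < y\<close> b unfolding avoids_4321_def by blast
qed

theorem avoids_4321_same_records_unique:
  assumes v: "v permutes {1..N}" and w: "w permutes {1..N}"
    and "avoids_4321 N v" "avoids_4321 N w" and rec: "same_records N v w"
  shows "v = w"
proof (rule ccontr)
  assume "v \<noteq> w"
  have "\<exists>x. x \<in> {1..N} \<and> v x \<noteq> w x"
  proof (rule ccontr)
    assume "\<not> ?thesis"
    then have "v y = w y" for y
      using permutes_not_in[OF v, of y] permutes_not_in[OF w, of y] by (cases "y \<in> {1..N}") auto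
    with \<open>v \<noteq> w\<close> show False
      by auto
  qed
  define x where "x = (LEAST x. x \<in> {1..N} \<and> v x \<noteq> w x)"
  have x: "x \<in> {1..N}" "v x \<noteq> w x"
    using LeastI_ex[OF \<open>\<exists>x. _\<close>] unfolding x_def by blast+
  have before: "\<forall>y\<in>{1..N}. y < x \<longrightarrow> v y = w y"
    using not_less_Least[of _ "\<lambda>x. x \<in> {1..N} \<and> v x \<noteq> w x"] unfolding x_def by blast
  consider "v x < w x" | "w x < v x"
    using x(2) by linarith
  then show False
  proof cases
    case 1
    then have "\<not> avoids_4321 N w"
      by (rule same_records_first_difference_not_avoids_4321[OF v w rec x(1) _ before])
    with assms(4) show False
      by contradiction
  next
    case 2
    have "\<not> avoids_4321 N v"
      using before by (intro same_records_first_difference_not_avoids_4321[OF w v same_records_sym[OF rec] x(1) 2]) auto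
    with assms(3) show False
      by contradiction
  qed
qed

lemma Min_eq_if:
  fixes A B :: "'a::linorder set"
  assumes "finite A" "finite B" "\<forall>a\<in>A. \<exists>b\<in>B. b \<le> a" "\<forall>b\<in>B. \<exists>a\<in>A. a \<le> b"
  shows "Min A = Min B"
proof (cases "A = {}")
  case False
  with assms have "B \<noteq> {}"
    by blast
  with False assms show ?thesis
    by (meson Min_in Min_le order.antisym order.trans)
qed (use assms in auto)

text \<open>Swapping the middle two entries of a \<open>4321\<close> pattern keeps all records: the outer
  entries of the pattern dominate both of them on either side.\<close>

lemma same_records_swap_middle_of_4321:
  assumes w: "w permutes {1..N}"
    and pat: "1 \<le> i" "i < j" "j < k" "k < l" "l \<le> N" "w i > w j" "w j > w k" "w k > w l"
  shows "same_records N (w \<circ> transpose j k) w"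
  unfolding same_records_def
proof (intro ballI conjI)
  fix x
  assume x: "x \<in> {1..N}"
  let ?w' = "w \<circ> transpose j k"
  have swapped: "?w' j = w k" "?w' k = w j" "y \<noteq> j \<Longrightarrow> y \<noteq> k \<Longrightarrow> ?w' y = w y" for y
    by auto
  show "Min (?w' ` {x..N}) = Min (w ` {x..N})"
  proof (rule Min_eq_if)
    show "\<forall>a\<in>?w' ` {x..N}. \<exists>b\<in>w ` {x..N}. b \<le> a"
    proof
      fix a
      assume "a \<in> ?w' ` {x..N}"
      then obtain y where y: "y \<in> {x..N}" "a = ?w' y"
        by blast
      show "\<exists>b\<in>w ` {x..N}. b \<le> a"
      proof (cases "y = j \<or> y = k")
        case True
        then have "k \<in> {x..N}" "w k \<le> a"
          using y pat swapped by auto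
        then show ?thesis
          by blast
      qed (use y swapped in auto)
    qed
    show "\<forall>b\<in>w ` {x..N}. \<exists>a\<in>?w' ` {x..N}. a \<le> b"
    proof
      fix b
      assume "b \<in> w ` {x..N}"
      then obtain y where y: "y \<in> {x..N}" "b = w y"
        by blast
      consider "y = j" | "y = k" | "y \<noteq> j" "y \<noteq> k"
        by blast
      then show "\<exists>a\<in>?w' ` {x..N}. a \<le> b"
      proof cases
        case 1
        then have "k \<in> {x..N}" "?w' k \<le> b"
          using y pat swapped by auto
        then show ?thesis by blast
      next
        case 2
        then have "l \<in> {x..N}" "?w' l \<le> b"
          using y pat swapped by auto
        then show ?thesis by blast
      next
        case 3
        then show ?thesis
          using y swapped by (metis image_eqI order_refl)
      qed
    qed
  qed simp_all
  show "Max (?w' ` {1..x}) = Max (w ` {1..x})"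
  proof (rule Max_eq_if)
    show "\<forall>a\<in>?w' ` {1..x}. \<exists>b\<in>w ` {1..x}. a \<le> b"
    proof
      fix a
      assume "a \<in> ?w' ` {1..x}"
      then obtain y where y: "y \<in> {1..x}" "a = ?w' y"
        by blast
      show "\<exists>b\<in>w ` {1..x}. a \<le> b"
      proof (cases "y = j \<or> y = k")
        case True
        then have "j \<in> {1..x}" "a \<le> w j"
          using y pat swapped by auto
        then show ?thesis
          by blast
      qed (use y swapped in auto)
    qed
    show "\<forall>b\<in>w ` {1..x}. \<exists>a\<in>?w' ` {1..x}. b \<le> a"
    proof
      fix b
      assume "b \<in> w ` {1..x}"
      then obtain y where y: "y \<in> {1..x}" "b = w y"
        by blast
      consider "y = j" | "y = k" | "y \<noteq> j" "y \<noteq> k"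
        by blast
      then show "\<exists>a\<in>?w' ` {1..x}. b \<le> a"
      proof cases
        case 1
        then have "i \<in> {1..x}" "b \<le> ?w' i"
          using y pat swapped by auto
        then show ?thesis by blast
      next
        case 2
        then have "j \<in> {1..x}" "b \<le> ?w' j"
          using y pat swapped by auto
        then show ?thesis by blast
      next
        case 3
        then show ?thesis
          using y swapped by (metis image_eqI order_refl)
      qed
    qed
  qed simp_all
qed

definition weighted_sum :: "nat \<Rightarrow> (nat \<Rightarrow> nat) \<Rightarrow> nat" where
  "weighted_sum N w = (\<Sum>x\<in>{1..N}. x * w x)"

lemma weighted_sum_swap_inversion:
  assumes jk: "1 \<le> j" "j < k" "k \<le> N" and "w k < w j"
  shows "weighted_sum N w < weighted_sum N (w \<circ> transpose j k)"
proof -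
  let ?A = "{1..N} - {j} - {k}"
  have split: "(\<Sum>x\<in>{1..N}. f x) = f j + f k + (\<Sum>x\<in>?A. f x)" for f :: "nat \<Rightarrow> nat"
  proof -
    have "(\<Sum>x\<in>{1..N}. f x) = f j + (\<Sum>x\<in>{1..N} - {j}. f x)"
      using jk by (intro sum.remove) auto
    also have "(\<Sum>x\<in>{1..N} - {j}. f x) = f k + (\<Sum>x\<in>?A. f x)"
      using jk by (intro sum.remove) auto
    finally show ?thesis
      by simp
  qed
  have "(\<Sum>x\<in>?A. x * (w \<circ> transpose j k) x) = (\<Sum>x\<in>?A. x * w x)"
    by (rule sum.cong) auto
  moreover have "j * w j + k * w k < j * w k + k * w j"
  proof -
    obtain d e where "k = j + d" "0 < d" "w j = w k + e" "0 < e"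
      using assms by (metis less_imp_add_positive)
    then show ?thesis
      by (simp add: algebra_simps)
  qed
  ultimately show ?thesis
    unfolding weighted_sum_def using split[of "\<lambda>x. x * w x"] split[of "\<lambda>x. x * (w \<circ> transpose j k) x"]
    by simp
qed

text \<open>A permutation with the largest weighted sum among those with the records of \<open>v\<close>
  avoids \<open>4321\<close>.\<close>

theorem exists_avoids_4321_same_records:
  assumes v: "v permutes {1..N}"
  shows "\<exists>w. w permutes {1..N} \<and> avoids_4321 N w \<and> same_records N w v"
proof -
  define W where "W = {w. w permutes {1..N} \<and> same_records N w v}"
  have "finite W"
    by (rule finite_subset[OF _ finite_permutations[of "{1..N::nat}"]]) (auto simp: W_def)
  moreover have "v \<in> W"
    using v by (simp add: W_def same_records_def)
  ultimately have "Max (weighted_sum N ` W) \<in> weighted_sum N ` W"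
    by (intro Max_in) auto
  then obtain w where wW: "w \<in> W" and wmax: "weighted_sum N w = Max (weighted_sum N ` W)"
    by auto
  have w: "w permutes {1..N}" and rec: "same_records N w v"
    using wW by (simp_all add: W_def)
  have "avoids_4321 N w"
    unfolding avoids_4321_def
  proof
    assume "\<exists>i j k l. 1 \<le> i \<and> i < j \<and> j < k \<and> k < l \<and> l \<le> N \<and> w j < w i \<and> w k < w j \<and> w l < w k"
    then obtain i j k l
      where pat: "1 \<le> i" "i < j" "j < k" "k < l" "l \<le> N" "w i > w j" "w j > w k" "w k > w l"
      by blast
    have "w \<circ> transpose j k permutes {1..N}"
      using pat by (intro permutes_compose[OF permutes_swap_id w]) auto
    then have "w \<circ> transpose j k \<in> W"
      using same_records_trans[OF same_records_swap_middle_of_4321[OF w pat] rec] by (simp add: W_def)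
    then have "weighted_sum N (w \<circ> transpose j k) \<le> weighted_sum N w"
      using \<open>finite W\<close> wmax by simp
    moreover have "weighted_sum N w < weighted_sum N (w \<circ> transpose j k)"
      using pat by (intro weighted_sum_swap_inversion) auto
    ultimately show False
      by simp
  qed
  with w rec show ?thesis
    by blast
qed

theorem mainTheorem3:
  fixes N :: nat and c :: "nat list set \<times> nat list set"
  assumes "N \<ge> 1"
    and "{w. w permutes {1..N} \<and> omega N w = c} \<noteq> {}"
  shows "\<exists>!w. w permutes {1..N} \<and> omega N w = c \<and> avoids_4321 N w"
proof -
  obtain v where v: "v permutes {1..N}" "omega N v = c"
    using assms(2) by auto
  obtain w where w: "w permutes {1..N}" "avoids_4321 N w" and rec: "same_records N w v"
    using exists_avoids_4321_same_records[OF v(1)] by blast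
  have wc: "omega N w = c"
    using omega_eq_iff_same_records[OF w(1) v(1)] rec v(2) by simp
  show ?thesis
  proof (rule ex1I[of _ w])
    show "w permutes {1..N} \<and> omega N w = c \<and> avoids_4321 N w"
      using w wc by simp
  next
    fix u
    assume u: "u permutes {1..N} \<and> omega N u = c \<and> avoids_4321 N u"
    then have "same_records N u w"
      using omega_eq_iff_same_records[of u N w] w(1) wc by simp
    then show "u = w"
      using avoids_4321_same_records_unique[of u N w] u w by blast
  qed
qed

end
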